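(* Assume one of the following sets of hypotheses: (i) $\mathcal A$ is convex and closed, $\mathcal P$ is convex and closed, $V_0$ is convex and lower semicontinuous, $V_1$ is superlinear and upper semicontinuous, and $\mathcal L$ is a linear subspace; (ii) $\mathcal A$ is closed, $\mathcal P$ is closed, $V_0$ is lower semicontinuous, $V_1$ is anti-star shaped and upper semicontinuous, and $\mathcal L=\{0\}$; (iii) $\mathcal A$ is closed, $\mathcal P$ is compact, $V_0$ is lower semicontinuous, $V_1$ is upper semicontinuous, and $\mathcal L=\{0\}$. Then $\mathcal C$ is closed in $\mathcal X\times\mathbb R$ (product topology) and $\rho$ is lower semicontinuous. Moreover, for every $X\in\mathcal X$ with $\rho(X)\in\mathbb R$ the infimum defining $\rho(X)$ is attained: $\rho(X)=\min\{V_0(x): x\in\mathcal P,\ X+V_1(x)\in\mathcal A\}$.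
   Context: Standing setup: Let $\mathcal{X}$ be a real topological vector space partially ordered by a convex cone $\mathcal{X}_+\subset\mathcal X$; write $X\ge Y$ iff $X-Y\in\mathcal X_+$. Fix $N\in\mathbb N$ and: a set $\mathcal P\subset\mathbb R^N$ with $0\in\mathcal P$; a function $V_0:\mathbb R^N\to\mathbb R$ with $V_0(0)=0$ and $V_0(x)\ge -V_0(-x)$ for all $x\in\mathbb R^N$; a map $V_1:\mathbb R^N\to\mathcal X$ with $V_1(0)=0$ and $V_1(x)\le -V_1(-x)$ for all $x\in\mathbb R^N$; a set $\mathcal A\subset\mathcal X$ with $0\in\mathcal A$ and $\mathcal A+\mathcal X_+\subset\mathcal A$. The risk measure is $\rho:\mathcal X\to[-\infty,\infty]$, $\rho(X)=\inf\{V_0(x): x\in\mathcal P,\ X+V_1(x)\in\mathcal A\}$, with $\inf\emptyset=+\infty$. $V_1$ is superlinear if it is concave and positively homogeneous; anti-star shaped if $V_1(\lambda x)\ge\lambda V_1(x)$ for all $\lambda\in[0,1]$, $x\in\mathbb R^N$. $V_1$ is upper semicontinuous at $x$ if for every neighborhood $\mathcal U$ of $V_1(x)$ there exists a neighborhood $\mathcal V$ of $x$ with $V_1(\mathcal V)\subset\mathcal U-\mathcal X_+$, and upper semicontinuous if this holds at every $x$. Asymptotic notions: for a nonempty set $C$ in a topological vector space, $C^\infty=\{X:\exists\text{ nets }(X_\alpha)\subset C,\ (\lambda_\alpha)\subset[0,\infty),\ \lambda_\alpha\to0,\ \lambda_\alpha X_\alpha\to X\}$. For $f:\mathbb R^N\to\mathbb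 R$, its asymptotic function $f^\infty:\mathbb R^N\to[-\infty,\infty]$ is the function whose epigraph $\{(x,m)\in\mathbb R^N\times\mathbb R: f^\infty(x)\le m\}$ equals $(\operatorname{epi}f)^\infty$, where $\operatorname{epi}f=\{(x,m)\in\mathbb R^N\times\mathbb R: f(x)\le m\}$. $\mathcal L=\{x\in\mathcal P^\infty: V_0^\infty(x)\le0,\ V_1(x)\in\mathcal A^\infty\}$, and $\mathcal C=\{(X,m)\in\mathcal X\times\mathbb R:\exists x\in\mathcal P \text{ with } V_0(x)\le m,\ X+V_1(x)\in\mathcal A\}$. *)

theory Defs
  imports "HOL-Analysis.Analysis"
begin

definition tvs :: "'a::{real_vector,topological_space} itself \<Rightarrow> bool" where
  "tvs _ \<longleftrightarrow> continuous_on UNIV (\<lambda>p::'a \<times> 'a. fst p + snd p)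
             \<and> continuous_on UNIV (\<lambda>p::real \<times> 'a. fst p *\<^sub>R snd p)"

definition cone_ge :: "'a::real_vector set \<Rightarrow> 'a \<Rightarrow> 'a \<Rightarrow> bool" where
  "cone_ge Xp X Y \<longleftrightarrow> X - Y \<in> Xp"

definition lsc :: "('a::topological_space \<Rightarrow> 'b::linorder) \<Rightarrow> bool" where
  "lsc f \<longleftrightarrow> (\<forall>x t. t < f x \<longrightarrow> eventually (\<lambda>y. t < f y) (nhds x))"

definition usc_cone_at :: "'a set \<Rightarrow> ('b::topological_space \<Rightarrow> 'a::{real_vector,topological_space}) \<Rightarrow> 'b \<Rightarrow> bool" where
  "usc_cone_at Xp V x \<longleftrightarrow>
     (\<forall>U. open U \<and> V x \<in> U \<longrightarrow>
        (\<exists>W. open W \<and> x \<in> W \<and> V ` W \<subseteq> {u - k | u k. u \<in> U \<and> k \<in> Xp}))"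

definition usc_cone :: "'a set \<Rightarrow> ('b::topological_space \<Rightarrow> 'a::{real_vector,topological_space}) \<Rightarrow> bool" where
  "usc_cone Xp V \<longleftrightarrow> (\<forall>x. usc_cone_at Xp V x)"

definition superlinear :: "'a::real_vector set \<Rightarrow> ('b::real_vector \<Rightarrow> 'a) \<Rightarrow> bool" where
  "superlinear Xp V \<longleftrightarrow>
     (\<forall>x y l. 0 \<le> l \<and> l \<le> 1 \<longrightarrow>
        cone_ge Xp (V (l *\<^sub>R x + (1 - l) *\<^sub>R y)) (l *\<^sub>R V x + (1 - l) *\<^sub>R V y))
   \<and> (\<forall>x l. 0 < l \<longrightarrow> V (l *\<^sub>R x) = l *\<^sub>R V x)"

definition anti_star_shaped :: "'a::real_vector set \<Rightarrow> ('b::real_vector \<Rightarrow> 'a) \<Rightarrow> bool" where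
  "anti_star_shaped Xp V \<longleftrightarrow>
     (\<forall>x l. 0 \<le> l \<and> l \<le> 1 \<longrightarrow> cone_ge Xp (V (l *\<^sub>R x)) (l *\<^sub>R V x))"

text \<open>Asymptotic cone via nets; a net (X_\<alpha>, \<lambda>_\<alpha>) is represented by the (proper) filter
  it induces on pairs (X, \<lambda>).\<close>
definition asymp_cone :: "'a::{real_vector,topological_space} set \<Rightarrow> 'a set" where
  "asymp_cone C = {X. \<exists>F :: ('a \<times> real) filter. F \<noteq> bot
      \<and> eventually (\<lambda>p. fst p \<in> C \<and> 0 \<le> snd p) F
      \<and> ((\<lambda>p. snd p) \<longlongrightarrow> 0) F
      \<and> ((\<lambda>p. snd p *\<^sub>R fst p) \<longlongrightarrow> X) F}"

definition asymp_fun :: "('a::{real_vector,topological_space} \<Rightarrow> real) \<Rightarrow> 'a \<Rightarrow> ereal" where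
  "asymp_fun f x = Inf (ereal ` {m. (x, m) \<in> asymp_cone (epigraph UNIV f)})"

definition rho :: "'n set \<Rightarrow> ('n \<Rightarrow> real) \<Rightarrow> ('n \<Rightarrow> 'a::real_vector) \<Rightarrow> 'a set \<Rightarrow> 'a \<Rightarrow> ereal" where
  "rho P V0 V1 A X = Inf (ereal ` (V0 ` {x \<in> P. X + V1 x \<in> A}))"

definition Lset :: "'n::{real_vector,topological_space} set \<Rightarrow> ('n \<Rightarrow> real) \<Rightarrow> ('n \<Rightarrow> 'a::{real_vector,topological_space}) \<Rightarrow> 'a set \<Rightarrow> 'n set" where
  "Lset P V0 V1 A = {x \<in> asymp_cone P. asymp_fun V0 x \<le> 0 \<and> V1 x \<in> asymp_cone A}"

definition Cset :: "'n set \<Rightarrow> ('n \<Rightarrow> real) \<Rightarrow> ('n \<Rightarrow> 'a::real_vector) \<Rightarrow> 'a set \<Rightarrow> ('a \<times> real) set" where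
  "Cset P V0 V1 A = {(X, m). \<exists>x \<in> P. V0 x \<le> m \<and> X + V1 x \<in> A}"

end

theory Submission
  imports Defs
begin

text \<open>Suppose \<open>(X\<^sub>\<alpha>, m\<^sub>\<alpha>) \<in> \<C>\<close> converge to \<open>(X, m) \<notin> \<C>\<close> and pick feasible
  \<open>x\<^sub>\<alpha>\<close>. Lower semicontinuity of \<open>V\<^sub>0\<close>, upper semicontinuity of \<open>V\<^sub>1\<close> and closedness
  of \<open>\<A>\<close> and \<open>\<P>\<close> make every compact set of candidates infeasible near \<open>(X, m)\<close>,
  so \<open>|x\<^sub>\<alpha>| \<rightarrow> \<infinity>\<close>. A cluster point \<open>d\<close> of \<open>x\<^sub>\<alpha>/|x\<^sub>\<alpha>|\<close> is a unit vector, and the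
  same semicontinuity (together with anti-star-shapedness of \<open>V\<^sub>1\<close>) puts it into \<open>\<L>\<close>.
  This contradicts \<open>\<L> = {0}\<close>; in the convex case \<open>\<L>\<close> is a subspace whose translations
  preserve feasibility, so the \<open>x\<^sub>\<alpha>\<close> may be taken in \<open>\<L>\<^sup>\<bottom>\<close>, forcing \<open>d \<in> \<L> \<inter> \<L>\<^sup>\<bottom> = {0}\<close>.
  If \<open>\<P>\<close> is compact, no escape to infinity is possible at all. Since
  \<open>\<rho>(X) = inf {m. (X, m) \<in> \<C>}\<close>, closedness of \<open>\<C>\<close> yields lower semicontinuity of \<open>\<rho>\<close>
  and attainment of the infimum.\<close>

lemma tvs_tendsto_add:
  fixes f g :: "'b \<Rightarrow> 'a::{real_vector,topological_space}"
  assumes "tvs TYPE('a)" "(f \<longlongrightarrow> a) F" "(g \<longlongrightarrow> b) F"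
  shows "((\<lambda>x. f x + g x) \<longlongrightarrow> a + b) F"
proof -
  have "continuous_on UNIV (\<lambda>p::'a \<times> 'a. fst p + snd p)" using assms(1) by (simp add: tvs_def)
  from continuous_on_tendsto_compose[OF this tendsto_Pair[OF assms(2,3)]] show ?thesis by simp
qed

lemma tvs_tendsto_scaleR:
  fixes f :: "'b \<Rightarrow> real" and g :: "'b \<Rightarrow> 'a::{real_vector,topological_space}"
  assumes "tvs TYPE('a)" "(f \<longlongrightarrow> a) F" "(g \<longlongrightarrow> b) F"
  shows "((\<lambda>x. f x *\<^sub>R g x) \<longlongrightarrow> a *\<^sub>R b) F"
proof -
  have "continuous_on UNIV (\<lambda>p::real \<times> 'a. fst p *\<^sub>R snd p)" using assms(1) by (simp add: tvs_def)
  from continuous_on_tendsto_compose[OF this tendsto_Pair[OF assms(2,3)]] show ?thesis by simp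
qed

lemma tvs_real_normed_vector: "tvs TYPE('a::real_normed_vector)"
  unfolding tvs_def by (intro conjI continuous_intros)

lemma tvs_open_add_split:
  fixes a b :: "'a::{real_vector,topological_space}"
  assumes "tvs TYPE('a)" "open U" "a + b \<in> U"
  obtains Ua Ub where "open Ua" "open Ub" "a \<in> Ua" "b \<in> Ub" "\<And>x y. x \<in> Ua \<Longrightarrow> y \<in> Ub \<Longrightarrow> x + y \<in> U"
proof -
  have "open ((\<lambda>p::'a \<times> 'a. fst p + snd p) -` U)"
    using assms(1,2) continuous_on_open_vimage[OF open_UNIV, of "\<lambda>p::'a \<times> 'a. fst p + snd p"]
    by (simp add: tvs_def)
  moreover have "(a, b) \<in> (\<lambda>p::'a \<times> 'a. fst p + snd p) -` U" using assms(3) by simp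
  ultimately obtain Ua Ub where "open Ua" "open Ub" "(a, b) \<in> Ua \<times> Ub"
      "Ua \<times> Ub \<subseteq> (\<lambda>p::'a \<times> 'a. fst p + snd p) -` U"
    by (rule open_prod_elim)
  then show ?thesis using that by fastforce
qed

lemma closed_if_eventually_not_in:
  assumes "\<And>x. x \<notin> S \<Longrightarrow> eventually (\<lambda>y. y \<notin> S) (nhds x)"
  shows "closed S"
  unfolding closed_def open_subopen[of "- S"]
  using assms by (fastforce simp: eventually_nhds)

lemma cluster_point_witness:
  assumes "inf (nhds d) (filtermap f F) \<noteq> bot" "open W" "d \<in> W" "eventually E F"
  shows "\<exists>q. E q \<and> f q \<in> W"
proof (rule ccontr)
  assume "\<nexists>q. E q \<and> f q \<in> W"
  then have "eventually (\<lambda>z. z \<notin> W) (filtermap f F)"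
    using assms(4) by (auto simp: eventually_filtermap elim: eventually_mono)
  moreover have "eventually (\<lambda>z. z \<in> W) (nhds d)" using assms(2,3) by (rule eventually_nhds_in_open)
  ultimately have "eventually (\<lambda>_. False) (inf (nhds d) (filtermap f F))"
    unfolding eventually_inf by blast
  then show False using assms(1) by (simp add: eventually_False)
qed

lemma cluster_point_Pair:
  assumes "inf (nhds d) (filtermap f F) \<noteq> bot" "(g \<longlongrightarrow> c) F"
  shows "inf (nhds (d, c)) (filtermap (\<lambda>q. (f q, g q)) F) \<noteq> bot"
proof
  assume "inf (nhds (d, c)) (filtermap (\<lambda>q. (f q, g q)) F) = bot"
  then obtain U where U: "open U" "(d, c) \<in> U" "eventually (\<lambda>q. (f q, g q) \<notin> U) F"
    unfolding trivial_limit_def eventually_inf eventually_filtermap eventually_nhds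
    by (metis (mono_tags, lifting) eventually_mono)
  obtain Ud Uc where UU: "open Ud" "open Uc" "(d, c) \<in> Ud \<times> Uc" "Ud \<times> Uc \<subseteq> U"
    using open_prod_elim[OF U(1,2)] .
  have "eventually (\<lambda>q. g q \<in> Uc \<and> (f q, g q) \<notin> U) F"
    using topological_tendstoD[OF assms(2) UU(2)] UU(3) U(3) by (auto elim: eventually_conj)
  then obtain q where "f q \<in> Ud" "g q \<in> Uc" "(f q, g q) \<notin> U"
    using cluster_point_witness[OF assms(1) UU(1)] UU(3) by blast
  then show False using UU(4) by blast
qed

lemma asymp_coneI:
  fixes X :: "'a::{real_vector,topological_space}"
  assumes "\<And>U e. open U \<Longrightarrow> X \<in> U \<Longrightarrow> 0 < e \<Longrightarrow> \<exists>c\<in>C. \<exists>l. 0 \<le> l \<and> l \<le> e \<and> l *\<^sub>R c \<in> U"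
  shows "X \<in> asymp_cone C"
proof -
  \<comment> \<open>the net of the definition, directed by shrinking neighbourhoods of \<open>X\<close> and scale bounds\<close>
  define B where "B = {(U, e). open U \<and> X \<in> U \<and> (0::real) < e}"
  define G where "G = (\<lambda>(U, e). principal {q::'a \<times> real. fst q \<in> C \<and> 0 \<le> snd q \<and> snd q \<le> e \<and> snd q *\<^sub>R fst q \<in> U})"
  define F where "F = (INF b\<in>B. G b)"
  have "B \<noteq> {}" unfolding B_def by (auto intro!: exI[of _ UNIV] exI[of _ 1])
  moreover have "\<exists>c\<in>B. G c \<le> inf (G a) (G b)" if "a \<in> B" "b \<in> B" for a b
  proof -
    obtain U1 e1 U2 e2 where ab: "a = (U1, e1)" "b = (U2, e2)" by (cases a, cases b) auto
    show ?thesis using that unfolding ab B_def G_def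
      by (intro bexI[of _ "(U1 \<inter> U2, min e1 e2)"]) auto
  qed
  ultimately have ev: "eventually P F \<longleftrightarrow> (\<exists>b\<in>B. eventually P (G b))" for P
    unfolding F_def by (rule eventually_INF_base)
  have "F \<noteq> bot"
  proof
    assume "F = bot"
    then obtain U e where "open U" "X \<in> U" "0 < e" "eventually (\<lambda>_. False) (G (U, e))"
      using ev[of "\<lambda>_. False"] unfolding B_def by auto
    moreover from assms[OF this(1-3)] obtain c l where "c \<in> C" "0 \<le> l" "l \<le> e" "l *\<^sub>R c \<in> U"
      by blast
    ultimately show False unfolding G_def by (auto simp: eventually_principal)
  qed
  moreover have "eventually (\<lambda>p. fst p \<in> C \<and> 0 \<le> snd p) F"
    unfolding ev by (rule bexI[of _ "(UNIV, 1)"]) (auto simp: B_def G_def eventually_principal)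
  moreover have "((\<lambda>p. snd p) \<longlongrightarrow> 0) F"
  proof (rule tendstoI)
    fix e :: real assume "0 < e"
    then show "eventually (\<lambda>p. dist (snd p) 0 < e) F"
      unfolding ev by (intro bexI[of _ "(UNIV, e/2)"]) (auto simp: B_def G_def eventually_principal)
  qed
  moreover have "((\<lambda>p. snd p *\<^sub>R fst p) \<longlongrightarrow> X) F"
  proof (rule topological_tendstoI)
    fix S assume "open S" "X \<in> S"
    then show "eventually (\<lambda>p. snd p *\<^sub>R fst p \<in> S) F"
      unfolding ev by (intro bexI[of _ "(S, 1)"]) (auto simp: B_def G_def eventually_principal)
  qed
  ultimately show ?thesis unfolding asymp_cone_def by blast
qed

lemma asymp_cone_of_cluster_point:
  fixes X :: "'a::{real_vector,topological_space}"
  assumes "eventually (\<lambda>q. c q \<in> C \<and> 0 \<le> l q) F" "(l \<longlongrightarrow> 0) F"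
    and "inf (nhds X) (filtermap (\<lambda>q. l q *\<^sub>R c q) F) \<noteq> bot"
  shows "X \<in> asymp_cone C"
proof (rule asymp_coneI)
  fix U and e :: real assume "open U" "X \<in> U" "0 < e"
  have "eventually (\<lambda>q. l q < e) F" using assms(2) \<open>0 < e\<close> by (rule order_tendstoD)
  with assms(1) have "eventually (\<lambda>q. c q \<in> C \<and> 0 \<le> l q \<and> l q < e) F"
    by eventually_elim auto
  from cluster_point_witness[OF assms(3) \<open>open U\<close> \<open>X \<in> U\<close> this]
  show "\<exists>c\<in>C. \<exists>l. 0 \<le> l \<and> l \<le> e \<and> l *\<^sub>R c \<in> U" by force
qed

lemma closed_convex_add_asymp_cone:
  fixes C :: "'a::{real_vector,topological_space} set"
  assumes "tvs TYPE('a)" "closed C" "convex C" "c \<in> C" "d \<in> asymp_cone C"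
  shows "c + d \<in> C"
proof -
  from assms(5) obtain F :: "('a \<times> real) filter" where F: "F \<noteq> bot"
    "eventually (\<lambda>p. fst p \<in> C \<and> 0 \<le> snd p) F" "((\<lambda>p. snd p) \<longlongrightarrow> 0) F"
    "((\<lambda>p. snd p *\<^sub>R fst p) \<longlongrightarrow> d) F"
    unfolding asymp_cone_def by blast
  have "eventually (\<lambda>p. snd p < 1) F" using F(3) by (rule order_tendstoD) simp
  with F(2) have "eventually (\<lambda>p. (1 - snd p) *\<^sub>R c + snd p *\<^sub>R fst p \<in> C) F"
    by eventually_elim (use assms(3,4) in \<open>auto intro: convexD\<close>)
  moreover have "((\<lambda>p. (1 - snd p) *\<^sub>R c + snd p *\<^sub>R fst p) \<longlongrightarrow> (1 - 0) *\<^sub>R c + d) F"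
    by (intro tvs_tendsto_add[OF assms(1)] tvs_tendsto_scaleR[OF assms(1)] tendsto_intros F(3,4))
  ultimately show ?thesis using Lim_in_closed_set[OF assms(2) _ F(1)] by simp
qed

lemma closed_epigraph_if_lsc:
  fixes f :: "'a::topological_space \<Rightarrow> real"
  assumes "lsc f"
  shows "closed (epigraph UNIV f)"
proof (rule closed_if_eventually_not_in)
  fix p assume p: "p \<notin> epigraph UNIV f"
  obtain x m where px: "p = (x, m)" by (cases p)
  define s where "s = (m + f x) / 2"
  have "m < s" "s < f x" using p px by (auto simp: s_def mem_epigraph)
  then have "eventually (\<lambda>z. s < f z) (nhds x)" using assms unfolding lsc_def by blast
  then obtain W where W: "open W" "x \<in> W" "\<And>z. z \<in> W \<Longrightarrow> s < f z"
    unfolding eventually_nhds by blast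
  have "eventually (\<lambda>q. q \<in> W \<times> {..<s}) (nhds p)"
    unfolding px using W \<open>m < s\<close> by (intro eventually_nhds_in_open) (auto simp: open_Times)
  then show "eventually (\<lambda>q. q \<notin> epigraph UNIV f) (nhds p)"
    by eventually_elim (auto simp: mem_epigraph dest!: W(3))
qed

lemma convex_lsc_asymp_fun_nonpos_descent:
  fixes f :: "'a::real_normed_vector \<Rightarrow> real"
  assumes "convex_on UNIV f" "lsc f" "asymp_fun f h \<le> 0"
  shows "f (y + h) \<le> f y"
proof (rule field_le_epsilon)
  fix e :: real assume "0 < e"
  then have "asymp_fun f h < ereal e" using le_less_trans[OF assms(3)] by simp
  then have "Inf (ereal ` {m. (h, m) \<in> asymp_cone (epigraph UNIV f)}) < ereal e"
    unfolding asymp_fun_def .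
  then obtain m where m: "(h, m) \<in> asymp_cone (epigraph UNIV f)" "m < e"
    unfolding Inf_less_iff by auto
  have "convex (epigraph UNIV f)" "(y, f y) \<in> epigraph UNIV f"
    using assms(1) by (simp_all add: convex_epigraph mem_epigraph)
  from closed_convex_add_asymp_cone[OF tvs_real_normed_vector closed_epigraph_if_lsc[OF assms(2)] this m(1)]
  have "(y + h, f y + m) \<in> epigraph UNIV f" by simp
  then show "f (y + h) \<le> f y + e" using m(2) by (simp add: mem_epigraph)
qed

lemma superlinear_imp_anti_star_shaped:
  assumes "0 \<in> Xp" "superlinear Xp V"
  shows "anti_star_shaped Xp V"
proof -
  have hom: "V (l *\<^sub>R x) = l *\<^sub>R V x" if "0 < l" for l x
    using assms(2) that unfolding superlinear_def by blast
  have "V 0 = 0" using hom[of 2 0] by (simp add: scaleR_2)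
  have "V (l *\<^sub>R x) - l *\<^sub>R V x \<in> Xp" if "0 \<le> l" for l x
  proof (cases "l = 0")
    case True
    then show ?thesis using \<open>V 0 = 0\<close> assms(1) by simp
  next
    case False
    then show ?thesis using that hom[of l x] assms(1) by simp
  qed
  then show ?thesis unfolding anti_star_shaped_def cone_ge_def by blast
qed

lemma superlinear_add_ge:
  assumes "superlinear Xp V"
  shows "cone_ge Xp (V (x + y)) (V x + V y)"
proof -
  have concave: "\<forall>x y l. 0 \<le> l \<and> l \<le> 1 \<longrightarrow>
      cone_ge Xp (V (l *\<^sub>R x + (1 - l) *\<^sub>R y)) (l *\<^sub>R V x + (1 - l) *\<^sub>R V y)"
    using assms unfolding superlinear_def by blast
  have "cone_ge Xp (V ((1/2) *\<^sub>R (2 *\<^sub>R x) + (1 - 1/2) *\<^sub>R (2 *\<^sub>R y)))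
      ((1/2) *\<^sub>R V (2 *\<^sub>R x) + (1 - 1/2) *\<^sub>R V (2 *\<^sub>R y))"
    using concave[rule_format, of "1/2" "2 *\<^sub>R x" "2 *\<^sub>R y"] by simp
  moreover have "V (2 *\<^sub>R x) = 2 *\<^sub>R V x" "V (2 *\<^sub>R y) = 2 *\<^sub>R V y"
    using assms unfolding superlinear_def by auto
  ultimately show ?thesis by (simp add: scaleR_add_right[symmetric])
qed

lemma Lset_shift_feasible:
  fixes V1 :: "'n::real_normed_vector \<Rightarrow> 'a::{real_vector,topological_space}"
  assumes "tvs TYPE('a)" "\<And>X K. X \<in> A \<Longrightarrow> K \<in> Xp \<Longrightarrow> X + K \<in> A"
    and "convex A" "closed A" "convex P" "closed P" "convex_on UNIV V0" "lsc V0" "superlinear Xp V1"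
    and "h \<in> Lset P V0 V1 A" "y \<in> P" "V0 y \<le> m" "Y + V1 y \<in> A"
  shows "y + h \<in> P \<and> V0 (y + h) \<le> m \<and> Y + V1 (y + h) \<in> A"
proof (intro conjI)
  have h: "h \<in> asymp_cone P" "asymp_fun V0 h \<le> 0" "V1 h \<in> asymp_cone A"
    using assms(10) unfolding Lset_def by auto
  show "y + h \<in> P"
    using closed_convex_add_asymp_cone[OF tvs_real_normed_vector assms(6,5,11) h(1)] .
  show "V0 (y + h) \<le> m"
    using convex_lsc_asymp_fun_nonpos_descent[OF assms(7,8) h(2), of y] assms(12) by simp
  have "Y + V1 y + V1 h \<in> A" using closed_convex_add_asymp_cone[OF assms(1,4,3,13) h(3)] .
  moreover have "V1 (y + h) - (V1 y + V1 h) \<in> Xp"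
    using superlinear_add_ge[OF assms(9)] by (simp add: cone_ge_def)
  ultimately have "Y + V1 y + V1 h + (V1 (y + h) - (V1 y + V1 h)) \<in> A" by (rule assms(2))
  then show "Y + V1 (y + h) \<in> A" by (simp add: algebra_simps)
qed

definition feasible :: "'n set \<Rightarrow> ('n \<Rightarrow> real) \<Rightarrow> ('n \<Rightarrow> 'a::real_vector) \<Rightarrow> 'a set \<Rightarrow> 'a \<Rightarrow> real \<Rightarrow> 'n \<Rightarrow> bool"
  where "feasible P V0 V1 A Y m y \<longleftrightarrow> y \<in> P \<and> V0 y \<le> m \<and> Y + V1 y \<in> A"

lemma mem_Cset_iff: "(Y, m) \<in> Cset P V0 V1 A \<longleftrightarrow> (\<exists>y. feasible P V0 V1 A Y m y)"
  by (auto simp: Cset_def feasible_def)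

lemma add_V1_notin_near:
  fixes V1 :: "'n::topological_space \<Rightarrow> 'a::{real_vector,topological_space}"
  assumes "tvs TYPE('a)" "closed A" "usc_cone_at Xp V1 y"
    and Amono: "\<And>X K. X \<in> A \<Longrightarrow> K \<in> Xp \<Longrightarrow> X + K \<in> A"
    and "X + V1 y \<notin> A"
  obtains UX W where "open UX" "X \<in> UX" "open W" "y \<in> W" "\<And>x z. x \<in> UX \<Longrightarrow> z \<in> W \<Longrightarrow> x + V1 z \<notin> A"
proof -
  obtain UX U1 where U: "open UX" "open U1" "X \<in> UX" "V1 y \<in> U1"
      "\<And>x u. x \<in> UX \<Longrightarrow> u \<in> U1 \<Longrightarrow> x + u \<notin> A"
    using tvs_open_add_split[OF assms(1), of "- A" X "V1 y"] assms(2,5) by (auto simp: open_Compl)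
  obtain W where W: "open W" "y \<in> W" "V1 ` W \<subseteq> {u - k | u k. u \<in> U1 \<and> k \<in> Xp}"
    using assms(3) U(2,4) unfolding usc_cone_at_def by blast
  have "x + V1 z \<notin> A" if "x \<in> UX" "z \<in> W" for x z
  proof
    assume "x + V1 z \<in> A"
    obtain u k where uk: "V1 z = u - k" "u \<in> U1" "k \<in> Xp" using W(3) \<open>z \<in> W\<close> by blast
    have "x + V1 z + k \<in> A" using Amono[OF \<open>x + V1 z \<in> A\<close> uk(3)] .
    moreover have "x + V1 z + k = x + u" using uk(1) by simp
    ultimately show False using U(5)[OF \<open>x \<in> UX\<close> uk(2)] by simp
  qed
  with U(1,3) W(1,2) show ?thesis using that by blast
qed

lemma infeasible_near_point:
  fixes V1 :: "'n::topological_space \<Rightarrow> 'a::{real_vector,topological_space}"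
  assumes tvs: "tvs TYPE('a)" and "closed A" "closed P" "lsc V0" "usc_cone Xp V1"
    and Amono: "\<And>X K. X \<in> A \<Longrightarrow> K \<in> Xp \<Longrightarrow> X + K \<in> A"
    and nC: "(X, m) \<notin> Cset P V0 V1 A"
  obtains W where "open W" "y \<in> W"
    "eventually (\<lambda>q. \<forall>z\<in>W. \<not> feasible P V0 V1 A (fst q) (snd q) z) (nhds (X, m))"
proof -
  consider "y \<notin> P" | "y \<in> P" "m < V0 y" | "y \<in> P" "X + V1 y \<notin> A"
    using nC by (force simp: mem_Cset_iff feasible_def)
  then show ?thesis
  proof cases
    case 1
    then show ?thesis using that[of "- P"] \<open>closed P\<close> by (auto simp: feasible_def)
  next
    case 2
    define s where "s = (m + V0 y) / 2"
    have "m < s" "s < V0 y" using 2 by (auto simp: s_def)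
    then have "eventually (\<lambda>z. s < V0 z) (nhds y)" using \<open>lsc V0\<close> unfolding lsc_def by blast
    then obtain W where W: "open W" "y \<in> W" "\<And>z. z \<in> W \<Longrightarrow> s < V0 z"
      unfolding eventually_nhds by blast
    have "((\<lambda>q. snd q) \<longlongrightarrow> m) (nhds (X, m))"
      using tendsto_snd[OF filterlim_ident[of "nhds (X, m)"]] by simp
    then have "eventually (\<lambda>q. snd q < s) (nhds (X, m))"
      using \<open>m < s\<close> by (rule order_tendstoD)
    then have "eventually (\<lambda>q. \<forall>z\<in>W. \<not> feasible P V0 V1 A (fst q) (snd q) z) (nhds (X, m))"
    proof eventually_elim
      case (elim q)
      show ?case
      proof (intro ballI notI)
        fix z assume "z \<in> W" "feasible P V0 V1 A (fst q) (snd q) z"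
        then show False using W(3)[of z] elim by (simp add: feasible_def)
      qed
    qed
    with W show ?thesis using that by blast
  next
    case 3
    have usc_y: "usc_cone_at Xp V1 y" using \<open>usc_cone Xp V1\<close> by (simp add: usc_cone_def)
    obtain UX W where U: "open UX" "X \<in> UX" "open W" "y \<in> W"
        "\<And>x z. x \<in> UX \<Longrightarrow> z \<in> W \<Longrightarrow> x + V1 z \<notin> A"
      using add_V1_notin_near[OF tvs \<open>closed A\<close> usc_y Amono 3(2)] by blast
    have "eventually (\<lambda>q. q \<in> UX \<times> UNIV) (nhds (X, m))"
      using U by (intro eventually_nhds_in_open) (auto simp: open_Times)
    then have "eventually (\<lambda>q. \<forall>z\<in>W. \<not> feasible P V0 V1 A (fst q) (snd q) z) (nhds (X, m))"
    proof eventually_elim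
      case (elim q)
      then show ?case using U(5)[of "fst q"] by (auto simp: feasible_def)
    qed
    with U(3,4) show ?thesis using that by blast
  qed
qed

lemma infeasible_near_compact:
  fixes V1 :: "'n::topological_space \<Rightarrow> 'a::{real_vector,topological_space}"
  assumes "tvs TYPE('a)" "closed A" "closed P" "lsc V0" "usc_cone Xp V1"
    and "\<And>X K. X \<in> A \<Longrightarrow> K \<in> Xp \<Longrightarrow> X + K \<in> A"
    and "(X, m) \<notin> Cset P V0 V1 A" "compact K"
  shows "eventually (\<lambda>q. \<forall>y\<in>K. \<not> feasible P V0 V1 A (fst q) (snd q) y) (nhds (X, m))"
proof -
  let ?Q = "\<lambda>W q. \<forall>z\<in>W. \<not> feasible P V0 V1 A (fst q) (snd q) z"
  have "\<forall>y. \<exists>W. open W \<and> y \<in> W \<and> eventually (?Q W) (nhds (X, m))"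
    using infeasible_near_point[OF assms(1-7)] by blast
  from choice[OF this] obtain W where "\<forall>y. open (W y) \<and> y \<in> W y \<and> eventually (?Q (W y)) (nhds (X, m))"
    by blast
  then have W: "\<And>y. open (W y)" "\<And>y. y \<in> W y" "\<And>y. eventually (?Q (W y)) (nhds (X, m))"
    by blast+
  obtain K' where K': "finite K'" "K \<subseteq> (\<Union>y\<in>K'. W y)"
  proof (rule compactE_image[OF assms(8), of K W])
    show "K \<subseteq> (\<Union>y\<in>K. W y)" using W(2) by blast
  qed (use W(1) that in auto)
  have "eventually (\<lambda>q. \<forall>y\<in>K'. ?Q (W y) q) (nhds (X, m))"
    using W(3) by (intro eventually_ball_finite K'(1)) auto
  then show ?thesis
  proof eventually_elim
    case (elim q)
    show ?case
    proof
      fix y assume "y \<in> K"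
      then obtain y' where "y' \<in> K'" "y \<in> W y'" using K'(2) by blast
      then show "\<not> feasible P V0 V1 A (fst q) (snd q) y" using elim by blast
    qed
  qed
qed

lemma asymp_fun_nonpos_of_cluster_point:
  fixes f :: "'n::{real_vector,topological_space} \<Rightarrow> real"
  assumes "eventually (\<lambda>q. f (x q) \<le> n q \<and> 0 \<le> l q) F" "(l \<longlongrightarrow> 0) F"
    and "((\<lambda>q. l q * n q) \<longlongrightarrow> 0) F"
    and "inf (nhds d) (filtermap (\<lambda>q. l q *\<^sub>R x q) F) \<noteq> bot"
  shows "asymp_fun f d \<le> 0"
proof -
  have "(d, 0) \<in> asymp_cone (epigraph UNIV f)"
  proof (rule asymp_cone_of_cluster_point[where c = "\<lambda>q. (x q, n q)" and l = l])
    show "eventually (\<lambda>q. (x q, n q) \<in> epigraph UNIV f \<and> 0 \<le> l q) F"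
      using assms(1) by (simp add: mem_epigraph)
    show "inf (nhds (d, 0)) (filtermap (\<lambda>q. l q *\<^sub>R (x q, n q)) F) \<noteq> bot"
      using cluster_point_Pair[OF assms(4,3)] by simp
  qed (rule assms(2))
  then have "ereal 0 \<in> ereal ` {m. (d, m) \<in> asymp_cone (epigraph UNIV f)}" by blast
  then show ?thesis unfolding asymp_fun_def zero_ereal_def by (rule Inf_lower)
qed

lemma V1_asymp_cone_of_cluster_point:
  fixes V1 :: "'n::{real_vector,topological_space} \<Rightarrow> 'a::{real_vector,topological_space}"
  assumes tvs: "tvs TYPE('a)" and cone: "convex_cone Xp" and usc: "usc_cone Xp V1"
    and Amono: "\<And>X K. X \<in> A \<Longrightarrow> K \<in> Xp \<Longrightarrow> X + K \<in> A"
    and star: "anti_star_shaped Xp V1"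
    and ev: "eventually (\<lambda>q. Y q + V1 (x q) \<in> A \<and> 0 < l q \<and> l q \<le> 1) F"
    and l0: "(l \<longlongrightarrow> 0) F" and lY: "((\<lambda>q. l q *\<^sub>R Y q) \<longlongrightarrow> 0) F"
    and d: "inf (nhds d) (filtermap (\<lambda>q. l q *\<^sub>R x q) F) \<noteq> bot"
  shows "V1 d \<in> asymp_cone A"
proof (rule asymp_coneI)
  fix U and e :: real assume U: "open U" "V1 d \<in> U" "0 < e"
  obtain U1 N where UN: "open U1" "open N" "V1 d \<in> U1" "0 \<in> N"
      "\<And>u y. u \<in> U1 \<Longrightarrow> y \<in> N \<Longrightarrow> u + y \<in> U"
    using tvs_open_add_split[OF tvs U(1), of "V1 d" 0] U(2) by auto
  obtain W where W: "open W" "d \<in> W" "V1 ` W \<subseteq> {u - k | u k. u \<in> U1 \<and> k \<in> Xp}"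
    using usc UN(1,3) unfolding usc_cone_def usc_cone_at_def by blast
  have "eventually (\<lambda>q. l q < e) F" using l0 U(3) by (rule order_tendstoD)
  moreover have "eventually (\<lambda>q. l q *\<^sub>R Y q \<in> N) F"
    using lY UN(2,4) by (rule topological_tendstoD)
  ultimately have "eventually (\<lambda>q. Y q + V1 (x q) \<in> A \<and> 0 < l q \<and> l q \<le> 1 \<and> l q < e \<and> l q *\<^sub>R Y q \<in> N) F"
    using ev by eventually_elim auto
  from cluster_point_witness[OF d W(1,2) this] obtain q where
    q: "Y q + V1 (x q) \<in> A" "0 < l q" "l q \<le> 1" "l q < e" "l q *\<^sub>R Y q \<in> N" "l q *\<^sub>R x q \<in> W"
    by blast
  then obtain u k where uk: "V1 (l q *\<^sub>R x q) = u - k" "u \<in> U1" "k \<in> Xp" using W(3) by blast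
  define j where "j = V1 (l q *\<^sub>R x q) - l q *\<^sub>R V1 (x q)"
  have "j \<in> Xp" using star q(2,3) unfolding j_def anti_star_shaped_def cone_ge_def by simp
  \<comment> \<open>\<open>a\<close> is a point of \<open>A\<close> whose rescaling \<open>l q *\<^sub>R a = u + l q *\<^sub>R Y q\<close> lies near \<open>V1 d\<close>\<close>
  define a where "a = Y q + V1 (x q) + (1 / l q) *\<^sub>R (j + k)"
  have "a \<in> A"
    unfolding a_def using Amono[OF q(1)] convex_cone_scaleR[OF cone _ convex_cone_add[OF cone \<open>j \<in> Xp\<close> uk(3)]] q(2)
    by simp
  have "l q *\<^sub>R a = u + l q *\<^sub>R Y q"
    unfolding a_def j_def using q(2) uk(1) by (simp add: algebra_simps)
  then have "l q *\<^sub>R a \<in> U" using UN(5)[OF uk(2) q(5)] by simp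
  then show "\<exists>c\<in>A. \<exists>l. 0 \<le> l \<and> l \<le> e \<and> l *\<^sub>R c \<in> U"
    using \<open>a \<in> A\<close> q(2,4) by (intro bexI[of _ a] exI[of _ "l q"]) auto
qed

lemma cluster_direction_in_Lset:
  fixes V1 :: "'n::{real_vector,topological_space} \<Rightarrow> 'a::{real_vector,topological_space}"
  assumes "tvs TYPE('a)" "convex_cone Xp" "usc_cone Xp V1"
    and "\<And>X K. X \<in> A \<Longrightarrow> K \<in> Xp \<Longrightarrow> X + K \<in> A" "anti_star_shaped Xp V1"
    and ev: "eventually (\<lambda>q. feasible P V0 V1 A (Y q) (n q) (x q) \<and> 0 < l q \<and> l q \<le> 1) F"
    and l0: "(l \<longlongrightarrow> 0) F" "((\<lambda>q. l q *\<^sub>R Y q) \<longlongrightarrow> 0) F" "((\<lambda>q. l q * n q) \<longlongrightarrow> 0) F"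
    and d: "inf (nhds d) (filtermap (\<lambda>q. l q *\<^sub>R x q) F) \<noteq> bot"
  shows "d \<in> Lset P V0 V1 A"
proof -
  have "eventually (\<lambda>q. x q \<in> P \<and> 0 \<le> l q) F"
    using ev by eventually_elim (auto simp: feasible_def)
  from asymp_cone_of_cluster_point[OF this l0(1) d] have "d \<in> asymp_cone P" .
  moreover have "eventually (\<lambda>q. V0 (x q) \<le> n q \<and> 0 \<le> l q) F"
    using ev by eventually_elim (auto simp: feasible_def)
  from asymp_fun_nonpos_of_cluster_point[OF this l0(1,3) d] have "asymp_fun V0 d \<le> 0" .
  moreover have "eventually (\<lambda>q. Y q + V1 (x q) \<in> A \<and> 0 < l q \<and> l q \<le> 1) F"
    using ev by eventually_elim (auto simp: feasible_def)
  from V1_asymp_cone_of_cluster_point[OF assms(1-5) this l0(1,2) d] have "V1 d \<in> asymp_cone A" .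
  ultimately show ?thesis unfolding Lset_def by simp
qed

lemma normalized_cluster_point_exists:
  fixes x :: "'q \<Rightarrow> 'n::euclidean_space"
  assumes "F \<noteq> bot" "eventually (\<lambda>q. x q \<noteq> 0) F"
  obtains d where "norm d = 1" "inf (nhds d) (filtermap (\<lambda>q. (1 / norm (x q)) *\<^sub>R x q) F) \<noteq> bot"
proof -
  have "eventually (\<lambda>z. z \<in> sphere 0 1) (filtermap (\<lambda>q. (1 / norm (x q)) *\<^sub>R x q) F)"
    unfolding eventually_filtermap using assms(2) by eventually_elim simp
  moreover have "filtermap (\<lambda>q. (1 / norm (x q)) *\<^sub>R x q) F \<noteq> bot"
    using assms(1) by (simp add: filtermap_bot_iff)
  ultimately show ?thesis
    using compact_sphere[of "0::'n" 1] that unfolding compact_filter by fastforce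
qed

lemma cluster_point_in_closed:
  assumes "closed S" "eventually (\<lambda>q. f q \<in> S) F" "inf (nhds d) (filtermap f F) \<noteq> bot"
  shows "d \<in> S"
proof (rule ccontr)
  assume "d \<notin> S"
  with cluster_point_witness[OF assms(3) _ _ assms(2), of "- S"] assms(1) show False
    by (auto simp: open_Compl)
qed

lemma unbounded_feasible_direction:
  fixes x :: "'q \<Rightarrow> 'n::euclidean_space" and V1 :: "'n \<Rightarrow> 'a::{real_vector,topological_space}"
  assumes tvs: "tvs TYPE('a)" and cone: "convex_cone Xp" and usc: "usc_cone Xp V1"
    and Amono: "\<And>X K. X \<in> A \<Longrightarrow> K \<in> Xp \<Longrightarrow> X + K \<in> A" and star: "anti_star_shaped Xp V1"
    and S: "closed S" "\<And>z c. z \<in> S \<Longrightarrow> 0 < c \<Longrightarrow> c *\<^sub>R z \<in> S"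
    and "F \<noteq> bot" "(Y \<longlongrightarrow> X) F" "(n \<longlongrightarrow> m) F"
    and ev: "eventually (\<lambda>q. x q \<in> S \<and> feasible P V0 V1 A (Y q) (n q) (x q)) F"
    and unbounded: "\<And>B. eventually (\<lambda>q. B < norm (x q)) F"
  obtains d where "norm d = 1" "d \<in> S" "d \<in> Lset P V0 V1 A"
proof -
  define l where "l q = 1 / norm (x q)" for q
  have "filterlim (\<lambda>q. norm (x q)) at_top F"
    unfolding filterlim_at_top
  proof
    fix B show "eventually (\<lambda>q. B \<le> norm (x q)) F" using unbounded[of B] by eventually_elim simp
  qed
  then have l0: "(l \<longlongrightarrow> 0) F" unfolding l_def inverse_eq_divide[symmetric] by (rule tendsto_inverse_0_at_top)
  have lY: "((\<lambda>q. l q *\<^sub>R Y q) \<longlongrightarrow> 0) F" and ln: "((\<lambda>q. l q * n q) \<longlongrightarrow> 0) F"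
    using tvs_tendsto_scaleR[OF tvs l0 \<open>(Y \<longlongrightarrow> X) F\<close>] tendsto_mult[OF l0 \<open>(n \<longlongrightarrow> m) F\<close>] by simp_all
  have evl: "eventually (\<lambda>q. x q \<in> S \<and> feasible P V0 V1 A (Y q) (n q) (x q) \<and> 0 < l q \<and> l q \<le> 1) F"
    using ev unbounded[of 1] by eventually_elim (auto simp: l_def divide_simps)
  obtain d where "norm d = 1" and d: "inf (nhds d) (filtermap (\<lambda>q. l q *\<^sub>R x q) F) \<noteq> bot"
    using normalized_cluster_point_exists[OF \<open>F \<noteq> bot\<close>, of x] unbounded[of 0] unfolding l_def
    by (auto elim: eventually_mono)
  have "eventually (\<lambda>q. l q *\<^sub>R x q \<in> S) F" using evl by eventually_elim (auto intro: S(2))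
  from cluster_point_in_closed[OF S(1) this d] have "d \<in> S" .
  moreover have "eventually (\<lambda>q. feasible P V0 V1 A (Y q) (n q) (x q) \<and> 0 < l q \<and> l q \<le> 1) F"
    using evl by eventually_elim auto
  from cluster_direction_in_Lset[OF tvs cone usc Amono star this l0 lY ln d]
  have "d \<in> Lset P V0 V1 A" .
  ultimately show ?thesis using \<open>norm d = 1\<close> that by blast
qed

lemma closed_CsetI:
  fixes V1 :: "'n::euclidean_space \<Rightarrow> 'a::{real_vector,topological_space}"
  assumes tvs: "tvs TYPE('a)" and cone: "convex_cone Xp" and "closed A" "closed P" "lsc V0"
    and usc: "usc_cone Xp V1" and Amono: "\<And>X K. X \<in> A \<Longrightarrow> K \<in> Xp \<Longrightarrow> X + K \<in> A"
    and star: "anti_star_shaped Xp V1"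
    and S: "closed S" "\<And>z c. z \<in> S \<Longrightarrow> 0 < c \<Longrightarrow> c *\<^sub>R z \<in> S" "S \<inter> Lset P V0 V1 A \<subseteq> {0}"
    and sel: "\<And>Y m. (Y, m) \<in> Cset P V0 V1 A \<Longrightarrow> \<exists>y\<in>S. feasible P V0 V1 A Y m y"
  shows "closed (Cset P V0 V1 A)"
proof (rule closed_if_eventually_not_in, rule ccontr)
  let ?C = "Cset P V0 V1 A"
  fix p assume "p \<notin> ?C" and "\<not> eventually (\<lambda>q. q \<notin> ?C) (nhds p)"
  obtain X m where p: "p = (X, m)" by (cases p)
  define F where "F = inf (nhds p) (principal ?C)"
  have "F \<noteq> bot"
    using \<open>\<not> eventually (\<lambda>q. q \<notin> ?C) (nhds p)\<close>
    unfolding F_def trivial_limit_def eventually_inf_principal by simp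
  have nhdsF: "eventually Q F" if "eventually Q (nhds p)" for Q
    using that unfolding F_def by (rule filter_leD[OF inf_le1])
  have "\<forall>q\<in>?C. \<exists>y. y \<in> S \<and> feasible P V0 V1 A (fst q) (snd q) y" using sel by force
  from bchoice[OF this] obtain x where "\<forall>q\<in>?C. x q \<in> S \<and> feasible P V0 V1 A (fst q) (snd q) (x q)"
    by blast
  moreover have "eventually (\<lambda>q. q \<in> ?C) F" unfolding F_def eventually_inf_principal by simp
  ultimately have ev: "eventually (\<lambda>q. x q \<in> S \<and> feasible P V0 V1 A (fst q) (snd q) (x q)) F"
    by (auto elim: eventually_mono)
  have unbounded: "eventually (\<lambda>q. B < norm (x q)) F" for B
  proof -
    have "eventually (\<lambda>q. \<forall>y\<in>cball 0 B. \<not> feasible P V0 V1 A (fst q) (snd q) y) F"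
      using infeasible_near_compact[OF tvs assms(3-5) usc Amono _ compact_cball] \<open>p \<notin> ?C\<close>
      by (intro nhdsF) (simp add: p)
    with ev show ?thesis by eventually_elim (auto simp: not_le)
  qed
  have "((\<lambda>q. fst q) \<longlongrightarrow> X) F" "((\<lambda>q. snd q) \<longlongrightarrow> m) F"
    using tendsto_fst[OF filterlim_ident, of p] tendsto_snd[OF filterlim_ident, of p]
    unfolding F_def p by (auto intro: tendsto_mono[OF inf_le1])
  from unbounded_feasible_direction[OF tvs cone usc Amono star S(1,2) \<open>F \<noteq> bot\<close> this ev unbounded]
  obtain d where "norm d = 1" "d \<in> S" "d \<in> Lset P V0 V1 A" .
  then show False using S(3) by auto
qed

lemma closed_Cset_superlinear:
  fixes V1 :: "'n::euclidean_space \<Rightarrow> 'a::{real_vector,topological_space}"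
  assumes tvs: "tvs TYPE('a)" and cone: "convex_cone Xp"
    and Amono: "\<And>X K. X \<in> A \<Longrightarrow> K \<in> Xp \<Longrightarrow> X + K \<in> A"
    and "convex A" "closed A" "convex P" "closed P" "convex_on UNIV V0" "lsc V0"
    and "superlinear Xp V1" "usc_cone Xp V1" and L: "subspace (Lset P V0 V1 A)"
  shows "closed (Cset P V0 V1 A)"
proof (rule closed_CsetI[where S = "(Lset P V0 V1 A)\<^sup>\<bottom>"])
  show "anti_star_shaped Xp V1"
    using superlinear_imp_anti_star_shaped[OF convex_cone_contains_0[OF cone] \<open>superlinear Xp V1\<close>] .
  show "closed ((Lset P V0 V1 A)\<^sup>\<bottom>)" by (intro closed_subspace subspace_orthogonal_comp)
  show "c *\<^sub>R z \<in> (Lset P V0 V1 A)\<^sup>\<bottom>" if "z \<in> (Lset P V0 V1 A)\<^sup>\<bottom>" for z and c :: real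
    using that by (intro subspace_scale subspace_orthogonal_comp)
  show "(Lset P V0 V1 A)\<^sup>\<bottom> \<inter> Lset P V0 V1 A \<subseteq> {0}" using orthogonal_Int_0[OF L] by blast
  show "\<exists>z\<in>(Lset P V0 V1 A)\<^sup>\<bottom>. feasible P V0 V1 A Y m z" if C: "(Y, m) \<in> Cset P V0 V1 A" for Y m
  proof -
    obtain y where y: "feasible P V0 V1 A Y m y" using C unfolding mem_Cset_iff by blast
    obtain h z where hz: "h \<in> Lset P V0 V1 A" "z \<in> (Lset P V0 V1 A)\<^sup>\<bottom>" "y = h + z"
      using subspace_sum_orthogonal_comp[OF L] by (metis UNIV_I set_plus_elim)
    have "- h \<in> Lset P V0 V1 A" using L hz(1) by (rule subspace_neg)
    then have "feasible P V0 V1 A Y m (y + - h)"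
      using Lset_shift_feasible[OF tvs Amono assms(4-10)] y unfolding feasible_def by blast
    with hz show ?thesis by (auto simp: algebra_simps)
  qed
qed (use tvs cone Amono assms(5,7,9,11) in auto)

lemma closed_Cset_anti_star_shaped:
  fixes V1 :: "'n::euclidean_space \<Rightarrow> 'a::{real_vector,topological_space}"
  assumes "tvs TYPE('a)" "convex_cone Xp" "\<And>X K. X \<in> A \<Longrightarrow> K \<in> Xp \<Longrightarrow> X + K \<in> A"
    and "closed A" "closed P" "lsc V0" "anti_star_shaped Xp V1" "usc_cone Xp V1"
    and "Lset P V0 V1 A = {0}"
  shows "closed (Cset P V0 V1 A)"
proof (rule closed_CsetI[where S = UNIV, OF assms(1,2,4,5,6,8,3,7) closed_UNIV])
  show "\<exists>y\<in>UNIV. feasible P V0 V1 A Y m y" if "(Y, m) \<in> Cset P V0 V1 A" for Y m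
    using that by (simp add: mem_Cset_iff)
qed (use assms(9) in auto)

lemma closed_Cset_compact:
  fixes V1 :: "'n::t2_space \<Rightarrow> 'a::{real_vector,topological_space}"
  assumes "tvs TYPE('a)" "\<And>X K. X \<in> A \<Longrightarrow> K \<in> Xp \<Longrightarrow> X + K \<in> A"
    and "closed A" "compact P" "lsc V0" "usc_cone Xp V1"
  shows "closed (Cset P V0 V1 A)"
proof (rule closed_if_eventually_not_in)
  fix p assume "p \<notin> Cset P V0 V1 A"
  then have "eventually (\<lambda>q. \<forall>y\<in>P. \<not> feasible P V0 V1 A (fst q) (snd q) y) (nhds p)"
    using infeasible_near_compact[OF assms(1,3) compact_imp_closed[OF assms(4)] assms(5,6,2) _ assms(4)]
    by (cases p) simp
  then show "eventually (\<lambda>q. q \<notin> Cset P V0 V1 A) (nhds p)"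
    by eventually_elim (auto simp: mem_Cset_iff feasible_def)
qed

lemma rho_le_if_mem_Cset:
  assumes "(X, m) \<in> Cset P V0 V1 A"
  shows "rho P V0 V1 A X \<le> ereal m"
proof -
  obtain y where "y \<in> P" "V0 y \<le> m" "X + V1 y \<in> A" using assms by (auto simp: Cset_def)
  then have "rho P V0 V1 A X \<le> ereal (V0 y)" unfolding rho_def by (auto intro!: Inf_lower)
  with \<open>V0 y \<le> m\<close> show ?thesis by (simp add: order_trans)
qed

lemma mem_Cset_if_rho_less:
  assumes "rho P V0 V1 A X < ereal m"
  shows "(X, m) \<in> Cset P V0 V1 A"
  using assms unfolding rho_def Inf_less_iff by (force simp: Cset_def)

lemma lsc_rho_if_closed_Cset:
  fixes V1 :: "'n \<Rightarrow> 'a::{real_vector,topological_space}"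
  assumes "closed (Cset P V0 V1 A)"
  shows "lsc (rho P V0 V1 A)"
  unfolding lsc_def
proof (intro allI impI)
  fix X and t :: ereal assume "t < rho P V0 V1 A X"
  then obtain s where s: "t < ereal s" "ereal s < rho P V0 V1 A X" using ereal_dense2 by blast
  then have "(X, s) \<notin> Cset P V0 V1 A" using rho_le_if_mem_Cset by fastforce
  with assms obtain UX Us where U: "open UX" "open Us" "(X, s) \<in> UX \<times> Us" "UX \<times> Us \<subseteq> - Cset P V0 V1 A"
    by (metis ComplI open_Compl open_prod_elim)
  have "eventually (\<lambda>Y. Y \<in> UX) (nhds X)" using U by (intro eventually_nhds_in_open) auto
  then show "eventually (\<lambda>Y. t < rho P V0 V1 A Y) (nhds X)"
  proof eventually_elim
    case (elim Y)
    then have "(Y, s) \<notin> Cset P V0 V1 A" using U by auto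
    then have "ereal s \<le> rho P V0 V1 A Y" using mem_Cset_if_rho_less not_le by blast
    with s(1) show ?case by simp
  qed
qed

lemma rho_attained_if_closed_Cset:
  fixes V1 :: "'n \<Rightarrow> 'a::{real_vector,topological_space}"
  assumes "closed (Cset P V0 V1 A)" "\<bar>rho P V0 V1 A X\<bar> \<noteq> \<infinity>"
  shows "\<exists>x\<in>P. X + V1 x \<in> A \<and> rho P V0 V1 A X = ereal (V0 x)"
proof -
  obtain r where r: "rho P V0 V1 A X = ereal r" using assms(2) by (cases "rho P V0 V1 A X") auto
  have "(X, r + inverse (real (Suc k))) \<in> Cset P V0 V1 A" for k
    using r by (intro mem_Cset_if_rho_less) simp
  moreover have "((\<lambda>k. (X, r + inverse (real (Suc k)))) \<longlongrightarrow> (X, r)) sequentially"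
    using tendsto_Pair[OF tendsto_const tendsto_add[OF tendsto_const LIMSEQ_inverse_real_of_nat]] by simp
  ultimately have "(X, r) \<in> Cset P V0 V1 A"
    by (intro Lim_in_closed_set[OF assms(1), of "\<lambda>k. (X, r + inverse (real (Suc k)))"]) simp_all
  then obtain x where x: "x \<in> P" "V0 x \<le> r" "X + V1 x \<in> A" by (auto simp: Cset_def)
  then have "rho P V0 V1 A X \<le> ereal (V0 x)" unfolding rho_def by (auto intro!: Inf_lower)
  with r x show ?thesis by (intro bexI[of _ x]) auto
qed

theorem mainTheorem14:
  fixes Xp :: "'a::{real_vector,topological_space} set"
    and P :: "(real^'n) set"
    and V0 :: "real^'n \<Rightarrow> real"
    and V1 :: "real^'n \<Rightarrow> 'a"
    and A :: "'a set"
  assumes tvs: "tvs TYPE('a)"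
    and cone: "convex_cone Xp"
    and P0: "0 \<in> P"
    and V00: "V0 0 = 0"
    and V0sym: "\<And>x. V0 x \<ge> - V0 (- x)"
    and V10: "V1 0 = 0"
    and V1sym: "\<And>x. cone_ge Xp (- V1 (- x)) (V1 x)"
    and A0: "0 \<in> A"
    and Amono: "\<And>X K. X \<in> A \<Longrightarrow> K \<in> Xp \<Longrightarrow> X + K \<in> A"
    and hyp: "(convex A \<and> closed A \<and> convex P \<and> closed P \<and> convex_on UNIV V0 \<and> lsc V0
               \<and> superlinear Xp V1 \<and> usc_cone Xp V1 \<and> subspace (Lset P V0 V1 A))
            \<or> (closed A \<and> closed P \<and> lsc V0 \<and> anti_star_shaped Xp V1 \<and> usc_cone Xp V1
               \<and> Lset P V0 V1 A = {0})
            \<or> (closed A \<and> compact P \<and> lsc V0 \<and> usc_cone Xp V1 \<and> Lset P V0 V1 A = {0})"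
  shows "closed (Cset P V0 V1 A) \<and> lsc (rho P V0 V1 A)
       \<and> (\<forall>X. \<bar>rho P V0 V1 A X\<bar> \<noteq> \<infinity> \<longrightarrow>
             (\<exists>x \<in> P. X + V1 x \<in> A \<and> rho P V0 V1 A X = ereal (V0 x)))"
proof -
  have "closed (Cset P V0 V1 A)"
    using hyp
  proof (elim disjE conjE)
    assume "convex A" "closed A" "convex P" "closed P" "convex_on UNIV V0" "lsc V0"
      "superlinear Xp V1" "usc_cone Xp V1" "subspace (Lset P V0 V1 A)"
    with tvs cone Amono show ?thesis by (rule closed_Cset_superlinear)
  next
    assume "closed A" "closed P" "lsc V0" "anti_star_shaped Xp V1" "usc_cone Xp V1" "Lset P V0 V1 A = {0}"
    with tvs cone Amono show ?thesis by (rule closed_Cset_anti_star_shaped)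
  next
    assume "closed A" "compact P" "lsc V0" "usc_cone Xp V1" "Lset P V0 V1 A = {0}"
    with tvs Amono show ?thesis by (intro closed_Cset_compact)
  qed
  moreover from this have "lsc (rho P V0 V1 A)" by (rule lsc_rho_if_closed_Cset)
  moreover have "\<forall>X. \<bar>rho P V0 V1 A X\<bar> \<noteq> \<infinity> \<longrightarrow>
      (\<exists>x \<in> P. X + V1 x \<in> A \<and> rho P V0 V1 A X = ereal (V0 x))"
    by (intro allI impI rho_attained_if_closed_Cset[OF calculation(1)])
  ultimately show ?thesis by blast
qed

end
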